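(* Let $A\in\mathbb{R}^{m\times n}$ have singular value decomposition $A=U\Sigma V^\top$ (with $U\in\mathbb{R}^{m\times m}$, $V\in\mathbb{R}^{n\times n}$ orthogonal), let $r=\operatorname{rank}(A)$, and let $\lambda:=(\sigma_1^2(A),\ldots,\sigma_r^2(A),0,\ldots,0)^\top\in\mathbb{R}^m$ (the eigenvalues of $AA^\top$ in the order matching the columns of $U$). Let $1\le s\le r$ and let $\mathcal{S}$ be a random variable with $\mathcal{S}\sim\operatorname{Vol}_s(AA^\top)$. Then $$\mathbb{E}[A_{\mathcal{S}}^\dagger A_{\mathcal{S}}]=A^\top H_s A,\qquad\text{where}\quad H_s:=\frac{U\operatorname{diag}\big(e_{s-1}(\lambda_{-1}),\ldots,e_{s-1}(\lambda_{-m})\big)U^\top}{e_s(\lambda)}.$$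
   Context: $\sigma_1(A)\ge\cdots\ge\sigma_r(A)>0$ are the nonzero singular values of $A$. For $\xi\in\mathbb{R}^p$ and $1\le \ell\le p$, $e_\ell(\xi):=\sum_{1\le i_1<\cdots<i_\ell\le p}\xi_{i_1}\cdots\xi_{i_\ell}$ is the $\ell$-th elementary symmetric polynomial, and $e_0(\xi):=1$. For $i\in[m]$, $\lambda_{-i}\in\mathbb{R}^{m-1}$ is $\lambda$ with its $i$-th entry removed. For $\mathcal{S}\subseteq[m]=\{1,\dots,m\}$, $A_{\mathcal{S}}$ is the submatrix of $A$ consisting of the rows indexed by $\mathcal{S}$, and $A_{\mathcal{S}}^\dagger$ its Moore–Penrose pseudoinverse. Volume sampling: $\binom{[m]}{s}$ denotes the set of $s$-element subsets of $[m]$; a random variable $\mathcal{S}_0$ with values in $\binom{[m]}{s}$ satisfies $\mathcal{S}_0\sim\operatorname{Vol}_s(AA^\top)$ if $\mathbb{P}(\mathcal{S}_0=\mathcal{S})=\det(A_{\mathcal{S}}A_{\mathcal{S}}^\top)/\sum_{\mathcal{J}\in\binom{[m]}{s}}\det(A_{\mathcal{J}}A_{\mathcal{J}}^\top)$ for all $\mathcal{S}\in\binom{[m]}{s}$. *)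

theory Defs
  imports "Jordan_Normal_Form.DL_Rank" "Jordan_Normal_Form.DL_Submatrix"
begin

definition pinv_mat :: "real mat \<Rightarrow> real mat" where
  "pinv_mat A = (SOME X. X \<in> carrier_mat (dim_col A) (dim_row A) \<and>
      A * X * A = A \<and> X * A * X = X \<and>
      transpose_mat (A * X) = A * X \<and> transpose_mat (X * A) = X * A)"

(* rows of A indexed by S (in increasing order) *)
definition row_submat :: "real mat \<Rightarrow> nat set \<Rightarrow> real mat" where
  "row_submat A S = submatrix A S {0..<dim_col A}"

definition esym :: "nat \<Rightarrow> nat set \<Rightarrow> (nat \<Rightarrow> real) \<Rightarrow> real" where
  "esym l I xi = (\<Sum>T\<in>{T. T \<subseteq> I \<and> card T = l}. \<Prod>i\<in>T. xi i)"

definition vol_prob :: "real mat \<Rightarrow> nat \<Rightarrow> nat set \<Rightarrow> real" where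
  "vol_prob A s S =
     det (row_submat A S * transpose_mat (row_submat A S)) /
     (\<Sum>J\<in>{J. J \<subseteq> {0..<dim_row A} \<and> card J = s}.
        det (row_submat A J * transpose_mat (row_submat A J)))"

definition vol_expect :: "real mat \<Rightarrow> nat \<Rightarrow> (nat set \<Rightarrow> real mat) \<Rightarrow> nat \<Rightarrow> nat \<Rightarrow> real mat" where
  "vol_expect A s F nr nc = mat nr nc (\<lambda>(i,j).
     \<Sum>S\<in>{S. S \<subseteq> {0..<dim_row A} \<and> card S = s}. vol_prob A s S * (F S $$ (i,j)))"

end

(*
  For a row submatrix B of A with Gram matrix G = B B^T, the matrix determinant lemma gives
  det G * (B^+ B)_ij = det G - det (B (I - E_ji) B^T), where E_ji is a matrix unit; when G is
  singular both sides vanish. Summing over the s-subsets of rows turns the expectation into a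
  difference of sums of s x s principal minors of A A^T and of A (I - E_ji) A^T. These sums are
  the coefficients of det (t I + X), hence invariant under conjugation by U. After conjugation
  A A^T becomes diag lambda and A (I - E_ji) A^T becomes diag lambda minus a rank-one matrix, whose
  principal minors expand into the elementary symmetric polynomials of lambda.
*)
theory Submission
  imports Defs
begin

section \<open>Determinants over index sets\<close>

definition det_on :: "('i \<Rightarrow> 'i \<Rightarrow> 'a :: comm_ring_1) \<Rightarrow> 'i set \<Rightarrow> 'a" where
  "det_on c S = (\<Sum>p | p permutes S. of_int (sign p) * (\<Prod>i\<in>S. c i (p i)))"

lemma det_on_cong:
  assumes "\<And>i j. i \<in> S \<Longrightarrow> j \<in> S \<Longrightarrow> c i j = c' i j"
  shows "det_on c S = det_on c' S"
  unfolding det_on_def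
  by (intro sum.cong refl arg_cong2[where f = "(*)"] prod.cong)
     (use assms permutes_in_image in fastforce)

lemma det_on_empty [simp]: "det_on c {} = 1"
  by (simp add: det_on_def)

lemma det_on_singleton [simp]: "det_on c {k} = c k k"
  by (simp add: det_on_def)

lemma det_eq_det_on:
  assumes "A \<in> carrier_mat n n"
  shows "det A = det_on (\<lambda>i j. A $$ (i, j)) {0..<n}"
  unfolding det_def'[OF assms] det_on_def by simp

lemma prod_diag_permutes:
  fixes d :: "'i \<Rightarrow> 'a :: comm_semiring_1"
  assumes "finite S" and "p permutes S" and "T \<subseteq> S"
  shows "(\<Prod>i\<in>S - T. if i = p i then d i else 0) = (if p permutes T then \<Prod>i\<in>S - T. d i else 0)"
proof (cases "p permutes T")
  case True
  then have "p i = i" if "i \<in> S - T" for i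
    using that permutes_not_in by fastforce
  with True show ?thesis by (auto intro: prod.cong)
next
  case False
  then obtain i where "i \<in> S - T" "p i \<noteq> i"
    using assms(2) unfolding permutes_def by blast
  then have "\<exists>i\<in>S - T. (if i = p i then d i else 0) = 0"
    by (intro bexI[of _ i]) auto
  then have "(\<Prod>i\<in>S - T. if i = p i then d i else 0) = 0"
    by (rule prod_zero[OF finite_Diff[OF assms(1)]])
  with False show ?thesis
    by simp
qed

lemma det_on_add_diag:
  assumes S: "finite S"
  shows "det_on (\<lambda>i j. c i j + (if i = j then d i else 0)) S
       = (\<Sum>T\<in>Pow S. (\<Prod>i\<in>S - T. d i) * det_on c T)"
proof -
  let ?t = "\<lambda>p T. of_int (sign p) * (\<Prod>i\<in>T. c i (p i)) * (\<Prod>i\<in>S - T. if i = p i then d i else 0)"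
  have "det_on (\<lambda>i j. c i j + (if i = j then d i else 0)) S = (\<Sum>p | p permutes S. \<Sum>T\<in>Pow S. ?t p T)"
    unfolding det_on_def
    by (intro sum.cong refl) (simp add: prod_add[OF S] sum_distrib_left mult.assoc)
  also have "\<dots> = (\<Sum>T\<in>Pow S. \<Sum>p | p permutes S. ?t p T)"
    by (rule sum.swap)
  also have "\<dots> = (\<Sum>T\<in>Pow S. \<Sum>p | p permutes T. (\<Prod>i\<in>S - T. d i) * (of_int (sign p) * (\<Prod>i\<in>T. c i (p i))))"
  proof (rule sum.cong[OF refl])
    fix T assume "T \<in> Pow S"
    then have T: "T \<subseteq> S" by blast
    have sub: "{p. p permutes T} \<subseteq> {p. p permutes S}"
      using T permutes_subset by blast
    have "(\<Sum>p | p permutes S. ?t p T) = (\<Sum>p | p permutes T. ?t p T)"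
      by (rule sum.mono_neutral_right[OF finite_permutations[OF S] sub])
         (simp add: prod_diag_permutes[OF S _ T])
    also have "\<dots> = (\<Sum>p | p permutes T. (\<Prod>i\<in>S - T. d i) * (of_int (sign p) * (\<Prod>i\<in>T. c i (p i))))"
      using sub by (intro sum.cong refl) (auto simp: prod_diag_permutes[OF S _ T])
    finally show "(\<Sum>p | p permutes S. ?t p T)
        = (\<Sum>p | p permutes T. (\<Prod>i\<in>S - T. d i) * (of_int (sign p) * (\<Prod>i\<in>T. c i (p i))))" .
  qed
  also have "\<dots> = (\<Sum>T\<in>Pow S. (\<Prod>i\<in>S - T. d i) * det_on c T)"
    by (simp add: det_on_def sum_distrib_left)
  finally show ?thesis .
qed

lemma sum_sign_permutes_eq_0:
  assumes T: "finite T" "2 \<le> card T"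
  shows "(\<Sum>p | p permutes T. sign p) = (0 :: int)"
proof -
  obtain x y where xy: "x \<in> T" "y \<in> T" "x \<noteq> y"
    using T by (metis card_le_Suc0_iff_eq not_less_eq_eq numeral_2_eq_2)
  define \<tau> where "\<tau> = Transposition.transpose x y"
  have \<tau>: "\<tau> permutes T" "permutation \<tau>"
    using xy T by (auto simp: \<tau>_def permutes_swap_id permutation_swap_id)
  have involution: "\<tau> \<circ> (\<tau> \<circ> p) = p" for p :: "'a \<Rightarrow> 'a"
    by (simp add: \<tau>_def fun_eq_iff)
  \<comment> \<open>composing with a transposition is a sign-reversing involution on the permutations of T\<close>
  have "(\<Sum>p | p permutes T. sign p) = (\<Sum>p | p permutes T. sign (\<tau> \<circ> p))"
    by (rule sum.reindex_bij_witness[where i = "(\<circ>) \<tau>" and j = "(\<circ>) \<tau>"])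
       (use \<tau> permutes_compose in \<open>auto simp only: involution\<close>)
  also have "\<dots> = (\<Sum>p | p permutes T. - sign p)"
    using \<tau> T xy
    by (intro sum.cong refl) (auto simp: sign_compose permutes_imp_permutation \<tau>_def sign_swap_id)
  finally show ?thesis
    by (simp add: sum_negf)
qed

lemma det_on_rank1_eq_0:
  assumes "finite T" "2 \<le> card T"
  shows "det_on (\<lambda>i j. a i * b j) T = 0"
proof -
  have "det_on (\<lambda>i j. a i * b j) T = of_int (\<Sum>p | p permutes T. sign p) * ((\<Prod>i\<in>T. a i) * (\<Prod>i\<in>T. b i))"
    unfolding det_on_def of_int_sum sum_distrib_right
  proof (intro sum.cong refl)
    fix p assume "p \<in> {p. p permutes T}"
    then have "(\<Prod>i\<in>T. b (p i)) = (\<Prod>i\<in>T. b i)"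
      using prod.permute[of p T b] by (simp add: comp_def)
    then show "of_int (sign p) * (\<Prod>i\<in>T. a i * b (p i)) = of_int (sign p) * ((\<Prod>i\<in>T. a i) * (\<Prod>i\<in>T. b i))"
      by (simp add: prod.distrib)
  qed
  then show ?thesis
    using sum_sign_permutes_eq_0[OF assms] by simp
qed

lemma sum_Pow_eq_sum_singletons:
  assumes S: "finite S" and g: "\<And>T. T \<subseteq> S \<Longrightarrow> 2 \<le> card T \<Longrightarrow> g T = 0"
  shows "(\<Sum>T\<in>Pow S. g T) = g {} + (\<Sum>k\<in>S. g {k})"
proof -
  have "(\<Sum>T\<in>Pow S. g T) = (\<Sum>T\<in>insert {} ((\<lambda>k. {k}) ` S). g T)"
  proof (rule sum.mono_neutral_right)
    show "\<forall>T\<in>Pow S - insert {} ((\<lambda>k. {k}) ` S). g T = 0"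
    proof
      fix T assume T: "T \<in> Pow S - insert {} ((\<lambda>k. {k}) ` S)"
      then have "finite T" "T \<noteq> {}" "\<not> (\<exists>k. T = {k})"
        using S finite_subset by auto
      then have "card T \<noteq> 0" "card T \<noteq> 1"
        by (auto simp: card_1_singleton_iff)
      then have "2 \<le> card T"
        by linarith
      with T g show "g T = 0" by blast
    qed
  qed (use S in auto)
  also have "\<dots> = g {} + (\<Sum>k\<in>S. g {k})"
    using S by (subst sum.insert) (auto simp: sum.reindex inj_on_def)
  finally show ?thesis .
qed

lemma det_on_diag_add_rank1:
  assumes "finite S"
  shows "det_on (\<lambda>i j. a i * b j + (if i = j then d i else 0)) S
       = (\<Prod>i\<in>S. d i) + (\<Sum>k\<in>S. a k * b k * (\<Prod>i\<in>S - {k}. d i))"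
proof -
  have "det_on (\<lambda>i j. a i * b j + (if i = j then d i else 0)) S
      = (\<Sum>T\<in>Pow S. (\<Prod>i\<in>S - T. d i) * det_on (\<lambda>i j. a i * b j) T)"
    by (rule det_on_add_diag[OF assms])
  also have "\<dots> = (\<Prod>i\<in>S. d i) + (\<Sum>k\<in>S. (\<Prod>i\<in>S - {k}. d i) * (a k * b k))"
    by (subst sum_Pow_eq_sum_singletons[OF assms])
       (simp_all add: det_on_rank1_eq_0[OF finite_subset[OF _ assms]])
  finally show ?thesis
    by (simp add: mult.commute)
qed

lemma det_one_minus_rank1:
  "det (1\<^sub>m k - mat k k (\<lambda>(r, t). w r * v t)) = 1 - (\<Sum>r<k. w r * v r)"
proof -
  have "det (1\<^sub>m k - mat k k (\<lambda>(r, t). w r * v t))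
      = det_on (\<lambda>r t. - w r * v t + (if r = t then 1 else 0)) {0..<k}"
    by (subst det_eq_det_on[of _ k]) (auto intro!: det_on_cong)
  also have "\<dots> = 1 - (\<Sum>r<k. w r * v r)"
    by (subst det_on_diag_add_rank1) (simp_all add: sum_negf atLeast0LessThan)
  finally show ?thesis .
qed

lemma det_on_reindex:
  assumes f: "bij_betw f T S" and T: "finite T"
  shows "det_on (\<lambda>i j. c (f i) (f j)) T = det_on c S"
proof -
  have inj: "inj_on f T"
    using f bij_betw_def by blast
  define g where "g = inv_into T f"
  have g: "bij_betw g S T"
    unfolding g_def by (rule bij_betw_inv_into[OF f])
  have gf: "g (f x) = x" if "x \<in> T" for x
    using inj that by (simp add: g_def)
  have fg: "f (g y) = y" if "y \<in> S" for y
    using f that by (simp add: g_def bij_betw_inv_into_right)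
  show ?thesis
    unfolding det_on_def
  proof (rule sum.reindex_bij_witness[where j = "map_permutation T f" and i = "map_permutation S g"])
    fix \<sigma> assume "\<sigma> \<in> {\<sigma>. \<sigma> permutes T}"
    then have \<sigma>: "\<sigma> permutes T" by simp
    show "map_permutation S g (map_permutation T f \<sigma>) = \<sigma>"
      by (rule map_permutation_compose_inv[OF f \<sigma> gf])
    show "map_permutation T f \<sigma> \<in> {p. p permutes S}"
      using map_permutation_permutes[OF f \<sigma>] by simp
    have "(\<Prod>i\<in>S. c i (map_permutation T f \<sigma> i)) = (\<Prod>i\<in>T. c (f i) (map_permutation T f \<sigma> (f i)))"
      by (rule prod.reindex_bij_betw[OF f, symmetric])
    also have "\<dots> = (\<Prod>i\<in>T. c (f i) (f (\<sigma> i)))"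
      by (intro prod.cong refl) (simp add: map_permutation_apply[OF inj])
    finally show "of_int (sign (map_permutation T f \<sigma>)) * (\<Prod>i\<in>S. c i (map_permutation T f \<sigma> i))
        = of_int (sign \<sigma>) * (\<Prod>i\<in>T. c (f i) (f (\<sigma> i)))"
      by (simp add: sign_map_permutation[OF inj \<sigma> T])
  next
    fix p assume "p \<in> {p. p permutes S}"
    then have p: "p permutes S" by simp
    show "map_permutation T f (map_permutation S g p) = p"
      by (rule map_permutation_compose_inv[OF g p fg])
    show "map_permutation S g p \<in> {\<sigma>. \<sigma> permutes T}"
      using map_permutation_permutes[OF g p] by simp
  qed
qed

lemma bij_betw_pick:
  assumes "finite S"
  shows "bij_betw (pick S) {0..<card S} S"
proof -
  have inj: "inj_on (pick S) {0..<card S}"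
    by (intro inj_onI) (metis atLeastLessThan_iff nat_neq_iff pick_mono_le)
  have "pick S ` {0..<card S} \<subseteq> S"
    using pick_in_set_le by auto
  moreover have "card (pick S ` {0..<card S}) = card S"
    using card_image[OF inj] by simp
  ultimately show ?thesis
    using inj assms card_subset_eq unfolding bij_betw_def by blast
qed

lemma det_submatrix_eq_det_on:
  assumes C: "C \<in> carrier_mat m m" and S: "S \<subseteq> {0..<m}"
  shows "det (submatrix C S S) = det_on (\<lambda>i j. C $$ (i, j)) S"
proof -
  have fin: "finite S"
    using S finite_subset by blast
  have rows: "{i. i < dim_row C \<and> i \<in> S} = S" and cols: "{i. i < dim_col C \<and> i \<in> S} = S"
    using S C by auto
  have "submatrix C S S \<in> carrier_mat (card S) (card S)"
    unfolding carrier_mat_def mem_Collect_eq dim_submatrix rows cols by simp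
  then have "det (submatrix C S S) = det_on (\<lambda>i j. submatrix C S S $$ (i, j)) {0..<card S}"
    by (rule det_eq_det_on)
  also have "\<dots> = det_on (\<lambda>i j. C $$ (pick S i, pick S j)) {0..<card S}"
    by (rule det_on_cong) (simp add: submatrix_index rows cols)
  also have "\<dots> = det_on (\<lambda>i j. C $$ (i, j)) S"
    by (rule det_on_reindex[OF bij_betw_pick[OF fin]]) simp
  finally show ?thesis .
qed

lemma index_mult_mat_sum:
  assumes "A \<in> carrier_mat nr n" and "B \<in> carrier_mat n nc" and "i < nr" and "j < nc"
  shows "(A * B) $$ (i, j) = (\<Sum>l<n. A $$ (i, l) * B $$ (l, j))"
  using assms by (auto simp: scalar_prod_def atLeast0LessThan intro!: sum.cong)

definition mat_unit :: "nat \<Rightarrow> nat \<Rightarrow> nat \<Rightarrow> 'a :: {zero, one} mat" where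
  "mat_unit n p q = mat n n (\<lambda>(i, j). if i = p \<and> j = q then 1 else 0)"

lemma mat_unit_carrier [simp]: "mat_unit n p q \<in> carrier_mat n n"
  by (simp add: mat_unit_def)

lemma mult_mat_unit_mult_transpose:
  fixes C B :: "'a :: comm_semiring_1 mat"
  assumes C: "C \<in> carrier_mat k n" and B: "B \<in> carrier_mat l n" and p: "p < n" and q: "q < n"
  shows "C * mat_unit n p q * transpose_mat B = mat k l (\<lambda>(r, t). C $$ (r, p) * B $$ (t, q))"
proof (rule eq_matI)
  fix r t assume "r < dim_row (mat k l (\<lambda>(r, t). C $$ (r, p) * B $$ (t, q)))"
    and "t < dim_col (mat k l (\<lambda>(r, t). C $$ (r, p) * B $$ (t, q)))"
  then have r: "r < k" and t: "t < l" by auto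
  have CE: "(C * mat_unit n p q) $$ (r, b) = (if b = q then C $$ (r, p) else 0)" if "b < n" for b
    using C r that p by (simp add: mat_unit_def scalar_prod_def if_distrib[of "(*) _"] cong: if_cong)
  have "(C * mat_unit n p q * transpose_mat B) $$ (r, t) = (\<Sum>b<n. (C * mat_unit n p q) $$ (r, b) * B $$ (t, b))"
    using C B r t by (simp add: scalar_prod_def atLeast0LessThan) (rule sum.cong; simp add: mat_unit_def)
  also have "\<dots> = C $$ (r, p) * B $$ (t, q)"
    using q by (simp add: CE if_distrib[of "\<lambda>x. x * _"] cong: if_cong)
  finally show "(C * mat_unit n p q * transpose_mat B) $$ (r, t) = mat k l (\<lambda>(r, t). C $$ (r, p) * B $$ (t, q)) $$ (r, t)"
    using r t by simp
qed (use C B in auto)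

lemma mult_one_minus_mat_unit_mult_transpose:
  fixes B :: "'a :: comm_ring_1 mat"
  assumes B: "B \<in> carrier_mat k n" and p: "p < n" and q: "q < n"
  shows "B * (1\<^sub>m n - mat_unit n p q) * transpose_mat B
       = B * transpose_mat B - mat k k (\<lambda>(r, t). B $$ (r, p) * B $$ (t, q))"
proof -
  have "B * (1\<^sub>m n - mat_unit n p q) = B - B * mat_unit n p q"
    using mult_minus_distrib_mat[OF B one_carrier_mat mat_unit_carrier] B by simp
  then show ?thesis
    using minus_mult_distrib_mat[OF B mult_carrier_mat[OF B mat_unit_carrier], of "transpose_mat B" k] B
    by (simp add: mult_mat_unit_mult_transpose[OF B B p q])
qed

lemma index_transpose_mult_diag_mult:
  fixes P :: "'a :: comm_semiring_1 mat"
  assumes P: "P \<in> carrier_mat m n" and i: "i < n" and j: "j < n"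
  shows "(transpose_mat P * mat_diag m d * P) $$ (i, j) = (\<Sum>k<m. P $$ (k, i) * d k * P $$ (k, j))"
proof -
  have "transpose_mat P * mat_diag m d * P = transpose_mat P * (mat_diag m d * P)"
    using P by (intro assoc_mult_mat[of _ n m _ m _ n]) auto
  also have "\<dots> = transpose_mat P * mat m n (\<lambda>(k, j). d k * P $$ (k, j))"
    by (simp add: mat_diag_mult_left[OF P])
  finally have "(transpose_mat P * mat_diag m d * P) $$ (i, j)
      = (\<Sum>k<m. transpose_mat P $$ (i, k) * mat m n (\<lambda>(k, j). d k * P $$ (k, j)) $$ (k, j))"
    using index_mult_mat_sum[of "transpose_mat P" n m _ n, OF _ _ i j] P by simp
  also have "\<dots> = (\<Sum>k<m. P $$ (k, i) * d k * P $$ (k, j))"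
    using P i j by (intro sum.cong) (auto simp: mult.assoc)
  finally show ?thesis .
qed

lemma mult_mult_transpose_left_factor:
  fixes U P N :: "'a :: comm_semiring_0 mat"
  assumes U: "U \<in> carrier_mat m m" and P: "P \<in> carrier_mat m n" and N: "N \<in> carrier_mat n n"
  shows "U * P * N * transpose_mat (U * P) = U * (P * N * transpose_mat P) * transpose_mat U"
proof -
  have PN: "P * N \<in> carrier_mat m n" and Pt: "transpose_mat P \<in> carrier_mat n m"
    and Ut: "transpose_mat U \<in> carrier_mat m m"
    using P N U by auto
  have "U * P * N * transpose_mat (U * P) = U * ((P * N) * (transpose_mat P * transpose_mat U))"
    unfolding transpose_mult[OF U P]
    using assoc_mult_mat[OF U P N] assoc_mult_mat[OF U PN mult_carrier_mat[OF Pt Ut]] by simp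
  also have "\<dots> = U * (P * N * transpose_mat P) * transpose_mat U"
    using assoc_mult_mat[OF PN Pt Ut] assoc_mult_mat[OF U mult_carrier_mat[OF PN Pt] Ut] by simp
  finally show ?thesis .
qed

lemma transpose_orthogonal_conj_cancel:
  fixes U X :: "'a :: comm_ring_1 mat"
  assumes U: "U \<in> carrier_mat m m" and UU: "transpose_mat U * U = 1\<^sub>m m" and X: "X \<in> carrier_mat m m"
  shows "transpose_mat U * (U * X * transpose_mat U) * U = X"
proof -
  have "transpose_mat U * (U * X * transpose_mat U) * U = (transpose_mat U * U) * X * (transpose_mat U * U)"
    using X U by (simp add: assoc_mult_mat[of _ m m _ m _ m])
  then show ?thesis
    unfolding UU using X by simp
qed

lemma mult_transpose_mult_transpose_orthogonal:
  fixes W V :: "'a :: comm_semiring_1 mat"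
  assumes W: "W \<in> carrier_mat m n" and V: "V \<in> carrier_mat n n" and VV: "transpose_mat V * V = 1\<^sub>m n"
  shows "W * transpose_mat V * transpose_mat (W * transpose_mat V) = W * transpose_mat W"
proof -
  have Vt: "transpose_mat V \<in> carrier_mat n n" and Wt: "transpose_mat W \<in> carrier_mat n m"
    using V W by auto
  have "W * transpose_mat V * transpose_mat (W * transpose_mat V) = W * (transpose_mat V * V * transpose_mat W)"
    unfolding transpose_mult[OF W Vt] transpose_transpose
    using assoc_mult_mat[OF W Vt mult_carrier_mat[OF V Wt]] assoc_mult_mat[OF Vt V Wt] by simp
  then show ?thesis
    unfolding VV using Wt by simp
qed

lemma mult_transpose_rectangular_diag:
  fixes S :: "'a :: comm_semiring_1 mat"
  assumes S: "S \<in> carrier_mat m n" and off_diag: "\<forall>i<m. \<forall>j<n. i \<noteq> j \<longrightarrow> S $$ (i, j) = 0"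
  shows "S * transpose_mat S = mat_diag m (\<lambda>i. if i < min m n then (S $$ (i, i))\<^sup>2 else 0)"
proof (rule eq_matI)
  fix r t assume "r < dim_row (mat_diag m (\<lambda>i. if i < min m n then (S $$ (i, i))\<^sup>2 else 0))"
    and "t < dim_col (mat_diag m (\<lambda>i. if i < min m n then (S $$ (i, i))\<^sup>2 else 0))"
  then have r: "r < m" and t: "t < m"
    by (auto simp: mat_diag_def)
  have "(S * transpose_mat S) $$ (r, t) = (\<Sum>a<n. S $$ (r, a) * S $$ (t, a))"
    using index_mult_mat_sum[of S m n "transpose_mat S" m r t] S r t by simp
  also have "\<dots> = (\<Sum>a<n. if a = r then if r = t then (S $$ (r, r))\<^sup>2 else 0 else 0)"
  proof (rule sum.cong[OF refl])
    fix a assume "a \<in> {..<n}"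
    then show "S $$ (r, a) * S $$ (t, a) = (if a = r then if r = t then (S $$ (r, r))\<^sup>2 else 0 else 0)"
      using r t off_diag by (cases "a = r"; cases "a = t") (auto simp: power2_eq_square)
  qed
  also have "\<dots> = mat_diag m (\<lambda>i. if i < min m n then (S $$ (i, i))\<^sup>2 else 0) $$ (r, t)"
    using r t by (auto simp: mat_diag_def)
  finally show "(S * transpose_mat S) $$ (r, t) = mat_diag m (\<lambda>i. if i < min m n then (S $$ (i, i))\<^sup>2 else 0) $$ (r, t)" .
qed (use S in \<open>auto simp: mat_diag_def\<close>)

lemma transpose_inverse_of_symmetric:
  fixes G Gi :: "'a :: comm_ring_1 mat"
  assumes G: "G \<in> carrier_mat k k" and Gi: "Gi \<in> carrier_mat k k"
    and sym: "transpose_mat G = G" and inv: "G * Gi = 1\<^sub>m k"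
  shows "transpose_mat Gi = Gi"
proof -
  have "transpose_mat Gi * G = 1\<^sub>m k"
    using transpose_mult[OF G Gi] sym inv by simp
  then have "transpose_mat Gi * (G * Gi) = Gi"
    using G Gi by (simp flip: assoc_mult_mat[of _ k k])
  then show ?thesis
    using inv Gi by simp
qed

lemma scalar_prod_self_eq_0_iff:
  fixes v :: "real vec"
  assumes "v \<in> carrier_vec n"
  shows "v \<bullet> v = 0 \<longleftrightarrow> v = 0\<^sub>v n"
proof
  assume "v \<bullet> v = 0"
  then have "(\<Sum>i\<in>{0..<n}. v $ i * v $ i) = 0"
    using assms by (simp add: scalar_prod_def)
  then have "\<forall>i\<in>{0..<n}. v $ i * v $ i = 0"
    by (subst sum_nonneg_eq_0_iff[symmetric]) auto
  then show "v = 0\<^sub>v n"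
    using assms by (intro eq_vecI) auto
qed (use assms in simp)

lemma mult_mat_vec_zero_right:
  assumes "A \<in> carrier_mat nr nc"
  shows "A *\<^sub>v 0\<^sub>v nc = (0\<^sub>v nr :: 'a :: comm_semiring_0 vec)"
  using assms by (intro eq_vecI) auto

section \<open>Sums of principal minors\<close>

definition principal_minor_sum :: "nat \<Rightarrow> 'a :: comm_ring_1 mat \<Rightarrow> 'a" where
  "principal_minor_sum k X = (\<Sum>S | S \<subseteq> {0..<dim_row X} \<and> card S = k. det_on (\<lambda>i j. X $$ (i, j)) S)"

lemma det_smult_one_add:
  assumes X: "X \<in> carrier_mat m m"
  shows "det (t \<cdot>\<^sub>m 1\<^sub>m m + X) = (\<Sum>k\<le>m. principal_minor_sum (m - k) X * t ^ k)"
proof -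
  let ?d = "\<lambda>T. det_on (\<lambda>i j. X $$ (i, j)) T"
  have "det (t \<cdot>\<^sub>m 1\<^sub>m m + X) = det_on (\<lambda>i j. X $$ (i, j) + (if i = j then t else 0)) {0..<m}"
    using X by (subst det_eq_det_on[of _ m]) (auto intro: det_on_cong)
  also have "\<dots> = (\<Sum>T\<in>Pow {0..<m}. t ^ (m - card T) * ?d T)"
    unfolding det_on_add_diag[OF finite_atLeastLessThan]
    by (rule sum.cong[OF refl]) (simp add: card_Diff_subset finite_subset)
  also have "\<dots> = (\<Sum>k\<le>m. \<Sum>T | T \<in> Pow {0..<m} \<and> m - card T = k. t ^ (m - card T) * ?d T)"
    by (rule sum.group[symmetric]) auto
  also have "\<dots> = (\<Sum>k\<le>m. principal_minor_sum (m - k) X * t ^ k)"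
  proof (rule sum.cong[OF refl])
    fix k assume "k \<in> {..m}"
    then have "{T. T \<in> Pow {0..<m} \<and> m - card T = k} = {T. T \<subseteq> {0..<m} \<and> card T = m - k}"
      using card_mono[of "{0..<m}"] by fastforce
    then have "(\<Sum>T | T \<in> Pow {0..<m} \<and> m - card T = k. t ^ (m - card T) * ?d T)
        = (\<Sum>T | T \<subseteq> {0..<m} \<and> card T = m - k. ?d T * t ^ k)"
      by (rule sum.cong) (use \<open>k \<in> {..m}\<close> in \<open>auto simp: mult.commute\<close>)
    then show "(\<Sum>T | T \<in> Pow {0..<m} \<and> m - card T = k. t ^ (m - card T) * ?d T)
        = principal_minor_sum (m - k) X * t ^ k"
      using X by (simp add: principal_minor_sum_def sum_distrib_right)
  qed
  finally show ?thesis .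
qed

lemma principal_minor_sum_eq_0:
  assumes "dim_row X < k"
  shows "principal_minor_sum k X = 0"
proof -
  have "card S \<le> dim_row X" if "S \<subseteq> {0..<dim_row X}" for S
    using card_mono[OF finite_atLeastLessThan that] by simp
  then have no_subsets: "{S. S \<subseteq> {0..<dim_row X} \<and> card S = k} = {}"
    using assms by (auto simp: not_le[symmetric])
  show ?thesis
    unfolding principal_minor_sum_def no_subsets by simp
qed

lemma principal_minor_sum_similar:
  fixes X Y :: "'a :: {idom, real_normed_div_algebra} mat"
  assumes "similar_mat X Y"
  shows "principal_minor_sum k X = principal_minor_sum k Y"
proof -
  obtain n P Q where carrier: "{X, Y, P, Q} \<subseteq> carrier_mat n n"
    and PQ: "P * Q = 1\<^sub>m n" and X: "X = P * Y * Q"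
    using similar_matD[OF assms] by blast
  have det_PQ: "det P * det Q = 1"
    using det_mult[of P n Q] carrier PQ by simp
  have "det (t \<cdot>\<^sub>m 1\<^sub>m n + X) = det (t \<cdot>\<^sub>m 1\<^sub>m n + Y)" for t
  proof -
    from carrier have P: "P \<in> carrier_mat n n" and Q: "Q \<in> carrier_mat n n"
      and Y: "Y \<in> carrier_mat n n" by auto
    have "P * (t \<cdot>\<^sub>m 1\<^sub>m n + Y) = t \<cdot>\<^sub>m P + P * Y"
      using mult_add_distrib_mat[OF P smult_carrier_mat[OF one_carrier_mat] Y]
        mult_smult_distrib[OF P one_carrier_mat] P by simp
    then have "P * (t \<cdot>\<^sub>m 1\<^sub>m n + Y) * Q = t \<cdot>\<^sub>m (P * Q) + P * Y * Q"
      using add_mult_distrib_mat[OF smult_carrier_mat[OF P] mult_carrier_mat[OF P Y] Q]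
        mult_smult_assoc_mat[OF P Q] by simp
    then have eq: "P * (t \<cdot>\<^sub>m 1\<^sub>m n + Y) * Q = t \<cdot>\<^sub>m 1\<^sub>m n + X"
      unfolding PQ X .
    have "det (P * (t \<cdot>\<^sub>m 1\<^sub>m n + Y) * Q) = det P * det Q * det (t \<cdot>\<^sub>m 1\<^sub>m n + Y)"
      using P Q Y by (simp add: det_mult[of _ n])
    then show ?thesis
      unfolding eq det_PQ by simp
  qed
  then have "\<forall>t. (\<Sum>i\<le>n. principal_minor_sum (n - i) X * t ^ i)
                = (\<Sum>i\<le>n. principal_minor_sum (n - i) Y * t ^ i)"
    using carrier by (simp add: det_smult_one_add)
  then have "\<forall>i\<le>n. principal_minor_sum (n - i) X = principal_minor_sum (n - i) Y"
    unfolding polyfun_eq_coeffs .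
  then show ?thesis
    using carrier by (cases "k \<le> n") (auto simp: principal_minor_sum_eq_0 dest: spec[of _ "n - k"])
qed

lemma principal_minor_sum_conj_orthogonal:
  fixes U X :: "real mat"
  assumes U: "U \<in> carrier_mat m m" and UU: "transpose_mat U * U = 1\<^sub>m m" and X: "X \<in> carrier_mat m m"
  shows "principal_minor_sum k (U * X * transpose_mat U) = principal_minor_sum k X"
proof (rule principal_minor_sum_similar)
  have "U * transpose_mat U = 1\<^sub>m m"
    using mat_mult_left_right_inverse[of "transpose_mat U" m U] U UU by simp
  then show "similar_mat (U * X * transpose_mat U) X"
    using U X UU by (intro similar_matI[of "U * X * transpose_mat U" X U "transpose_mat U" m]) auto
qed

lemma principal_minor_sum_orthogonal_left_factor:
  fixes U P N :: "real mat"
  assumes U: "U \<in> carrier_mat m m" and UU: "transpose_mat U * U = 1\<^sub>m m"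
    and P: "P \<in> carrier_mat m n" and N: "N \<in> carrier_mat n n"
  shows "principal_minor_sum k (U * P * N * transpose_mat (U * P)) = principal_minor_sum k (P * N * transpose_mat P)"
  unfolding mult_mult_transpose_left_factor[OF U P N]
  by (rule principal_minor_sum_conj_orthogonal[OF U UU]) (use P N in simp)

lemma sum_subsets_sum_prod_Diff:
  fixes f lam :: "nat \<Rightarrow> real"
  assumes I: "finite I" and s: "1 \<le> s"
  shows "(\<Sum>S | S \<subseteq> I \<and> card S = s. \<Sum>k\<in>S. f k * (\<Prod>i\<in>S - {k}. lam i))
       = (\<Sum>k\<in>I. f k * esym (s - 1) (I - {k}) lam)"
proof -
  let ?g = "\<lambda>S k. f k * (\<Prod>i\<in>S - {k}. lam i)"
  have "(\<Sum>S | S \<subseteq> I \<and> card S = s. \<Sum>k\<in>S. ?g S k)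
      = (\<Sum>S | S \<subseteq> I \<and> card S = s. \<Sum>k | k \<in> I \<and> k \<in> S. ?g S k)"
    by (intro sum.cong refl) auto
  also have "\<dots> = (\<Sum>k\<in>I. \<Sum>S | S \<in> {S. S \<subseteq> I \<and> card S = s} \<and> k \<in> S. ?g S k)"
    using I by (intro sum.swap_restrict) auto
  also have "\<dots> = (\<Sum>k\<in>I. \<Sum>T | T \<subseteq> I - {k} \<and> card T = s - 1. f k * (\<Prod>i\<in>T. lam i))"
  proof (rule sum.cong[OF refl])
    fix k assume k: "k \<in> I"
    show "(\<Sum>S | S \<in> {S. S \<subseteq> I \<and> card S = s} \<and> k \<in> S. ?g S k)
        = (\<Sum>T | T \<subseteq> I - {k} \<and> card T = s - 1. f k * (\<Prod>i\<in>T. lam i))"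
    proof (rule sum.reindex_bij_witness[where i = "insert k" and j = "\<lambda>S. S - {k}"])
      fix S assume "S \<in> {S. S \<in> {S. S \<subseteq> I \<and> card S = s} \<and> k \<in> S}"
      then show "insert k (S - {k}) = S" "S - {k} \<in> {T. T \<subseteq> I - {k} \<and> card T = s - 1}"
        "f k * (\<Prod>i\<in>S - {k}. lam i) = ?g S k"
        using I finite_subset by auto
    next
      fix T assume T: "T \<in> {T. T \<subseteq> I - {k} \<and> card T = s - 1}"
      then have "finite T" "k \<notin> T"
        using I finite_subset by auto
      then show "insert k T - {k} = T" "insert k T \<in> {S. S \<in> {S. S \<subseteq> I \<and> card S = s} \<and> k \<in> S}"
        using T k s by auto
    qed
  qed
  also have "\<dots> = (\<Sum>k\<in>I. f k * esym (s - 1) (I - {k}) lam)"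
    by (simp add: esym_def sum_distrib_left)
  finally show ?thesis .
qed

lemma principal_minor_sum_diag_minus_rank1:
  fixes X :: "real mat"
  assumes X: "X \<in> carrier_mat m m"
    and entries: "\<And>r t. r < m \<Longrightarrow> t < m \<Longrightarrow> X $$ (r, t) = (if r = t then lam r else 0) - a r * b t"
    and s: "1 \<le> s"
  shows "principal_minor_sum s X
       = esym s {0..<m} lam - (\<Sum>k\<in>{0..<m}. a k * b k * esym (s - 1) ({0..<m} - {k}) lam)"
proof -
  have "det_on (\<lambda>i j. X $$ (i, j)) S = (\<Prod>i\<in>S. lam i) - (\<Sum>k\<in>S. a k * b k * (\<Prod>i\<in>S - {k}. lam i))"
    if S: "S \<subseteq> {0..<m}" for S
  proof -
    have "det_on (\<lambda>i j. X $$ (i, j)) S = det_on (\<lambda>i j. - a i * b j + (if i = j then lam i else 0)) S"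
    proof (rule det_on_cong)
      fix i j assume "i \<in> S" "j \<in> S"
      with S have "i < m" "j < m" by auto
      then show "X $$ (i, j) = - a i * b j + (if i = j then lam i else 0)"
        by (simp add: entries)
    qed
    also have "\<dots> = (\<Prod>i\<in>S. lam i) - (\<Sum>k\<in>S. a k * b k * (\<Prod>i\<in>S - {k}. lam i))"
      using S by (subst det_on_diag_add_rank1) (auto simp: finite_subset sum_negf)
    finally show ?thesis .
  qed
  then have "principal_minor_sum s X
      = esym s {0..<m} lam - (\<Sum>S | S \<subseteq> {0..<m} \<and> card S = s. \<Sum>k\<in>S. a k * b k * (\<Prod>i\<in>S - {k}. lam i))"
    using X by (simp add: principal_minor_sum_def esym_def sum_subtractf)
  then show ?thesis
    using sum_subsets_sum_prod_Diff[OF finite_atLeastLessThan s] by simp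
qed

lemma principal_minor_sum_mat_diag:
  assumes "1 \<le> s"
  shows "principal_minor_sum s (mat_diag m lam) = esym s {0..<m} lam"
  using principal_minor_sum_diag_minus_rank1[of "mat_diag m lam" m lam "\<lambda>_. 0" "\<lambda>_. 0", OF _ _ assms]
  by (simp add: mat_diag_def)

section \<open>The pseudoinverse of a matrix of full row rank\<close>

lemma det_mult_mult_transpose_eq_0:
  fixes B N :: "real mat"
  assumes B: "B \<in> carrier_mat k n" and N: "N \<in> carrier_mat n n"
    and gram: "det (B * transpose_mat B) = 0"
  shows "det (B * N * transpose_mat B) = 0"
proof -
  obtain y where y: "y \<in> carrier_vec k" "y \<noteq> 0\<^sub>v k" and "(B * transpose_mat B) *\<^sub>v y = 0\<^sub>v k"
    using gram det_0_iff_vec_prod_zero_field[of "B * transpose_mat B" k] B by auto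
  then have By: "B *\<^sub>v (transpose_mat B *\<^sub>v y) = 0\<^sub>v k"
    using B by simp
  have "(transpose_mat B *\<^sub>v y) \<bullet> (transpose_mat B *\<^sub>v y) = y \<bullet> (B *\<^sub>v (transpose_mat B *\<^sub>v y))"
    using transpose_vec_mult_scalar[of B k n "transpose_mat B *\<^sub>v y" y] B y by simp
  \<comment> \<open>hence y is a left null vector of B, and so of B N B^T\<close>
  then have Bty: "transpose_mat B *\<^sub>v y = 0\<^sub>v n"
    using By y B by (simp add: scalar_prod_self_eq_0_iff[of _ n])
  have "transpose_mat (B * N * transpose_mat B) = B * (transpose_mat N * transpose_mat B)"
    using transpose_mult[of "B * N" k n "transpose_mat B" k] transpose_mult[OF B N] B N
    by simp
  then have "transpose_mat (B * N * transpose_mat B) *\<^sub>v y = 0\<^sub>v k"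
    using B N y Bty by (simp add: assoc_mult_mat_vec[of _ k n _ k] mult_mat_vec_zero_right[of _ n n]
      mult_mat_vec_zero_right[OF B])
  then have "det (transpose_mat (B * N * transpose_mat B)) = 0"
    using det_0_iff_vec_prod_zero_field[of "transpose_mat (B * N * transpose_mat B)" k] B N y by auto
  then show ?thesis
    using B N by (simp add: det_transpose[of _ k])
qed

lemma pinv_mat_penrose_full_row_rank:
  fixes B Gi :: "real mat"
  assumes B: "B \<in> carrier_mat k n" and Gi: "Gi \<in> carrier_mat k k"
    and inv: "B * transpose_mat B * Gi = 1\<^sub>m k"
  shows "pinv_mat B \<in> carrier_mat n k" and "B * pinv_mat B * B = B"
    and "transpose_mat (pinv_mat B * B) = pinv_mat B * B"
proof -
  have Bt: "transpose_mat B \<in> carrier_mat n k"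
    using B by simp
  have "transpose_mat (B * transpose_mat B) = B * transpose_mat B"
    using transpose_mult[OF B Bt] by simp
  then have Gi_sym: "transpose_mat Gi = Gi"
    using B by (intro transpose_inverse_of_symmetric[OF _ Gi _ inv]) auto
  define X0 where "X0 = transpose_mat B * Gi"
  have X0: "X0 \<in> carrier_mat n k"
    using Bt Gi by (simp add: X0_def)
  have BX0: "B * X0 = 1\<^sub>m k"
    using assoc_mult_mat[OF B Bt Gi] inv by (simp add: X0_def)
  have "transpose_mat (X0 * B) = X0 * B"
    using transpose_mult[OF X0 B] transpose_mult[OF Bt Gi] Gi_sym assoc_mult_mat[OF Bt Gi B]
    by (simp add: X0_def)
  moreover have "X0 * B * X0 = X0"
    using assoc_mult_mat[OF X0 B X0] X0 by (simp add: BX0)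
  ultimately have "\<exists>X. X \<in> carrier_mat (dim_col B) (dim_row B) \<and> B * X * B = B \<and> X * B * X = X \<and>
      transpose_mat (B * X) = B * X \<and> transpose_mat (X * B) = X * B"
    using B X0 BX0 by (intro exI[of _ X0]) simp
  from someI_ex[OF this] show "pinv_mat B \<in> carrier_mat n k" and "B * pinv_mat B * B = B"
    and "transpose_mat (pinv_mat B * B) = pinv_mat B * B"
    using B unfolding pinv_mat_def by auto
qed

lemma penrose_projection_full_row_rank:
  fixes B X Gi :: "real mat"
  assumes B: "B \<in> carrier_mat k n" and X: "X \<in> carrier_mat n k" and Gi: "Gi \<in> carrier_mat k k"
    and inv: "Gi * (B * transpose_mat B) = 1\<^sub>m k"
    and BXB: "B * X * B = B" and sym: "transpose_mat (X * B) = X * B"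
  shows "X * B = transpose_mat B * Gi * B"
proof -
  define P where "P = transpose_mat B * Gi * B"
  have Bt: "transpose_mat B \<in> carrier_mat n k" and Xt: "transpose_mat X \<in> carrier_mat k n"
    using B X by auto
  \<comment> \<open>both sides are the orthogonal projection onto the row space of B\<close>
  have "P * (X * B) = transpose_mat B * Gi * (B * X * B)"
    using assoc_mult_mat[OF mult_carrier_mat[OF Bt Gi] B mult_carrier_mat[OF X B]]
      assoc_mult_mat[OF B X B] by (simp add: P_def)
  then have P_XB: "P * (X * B) = P"
    unfolding BXB P_def .
  have XB: "X * B = transpose_mat B * transpose_mat X"
    using sym transpose_mult[OF X B] by simp
  have "P * (X * B) = (transpose_mat B * Gi) * (B * (transpose_mat B * transpose_mat X))"
    unfolding P_def XB by (rule assoc_mult_mat[OF mult_carrier_mat[OF Bt Gi] B mult_carrier_mat[OF Bt Xt]])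
  also have "\<dots> = transpose_mat B * (Gi * (B * (transpose_mat B * transpose_mat X)))"
    by (rule assoc_mult_mat[OF Bt Gi mult_carrier_mat[OF B mult_carrier_mat[OF Bt Xt]]])
  also have "B * (transpose_mat B * transpose_mat X) = (B * transpose_mat B) * transpose_mat X"
    by (rule assoc_mult_mat[OF B Bt Xt, symmetric])
  also have "Gi * ((B * transpose_mat B) * transpose_mat X) = transpose_mat X"
    using assoc_mult_mat[OF Gi mult_carrier_mat[OF B Bt] Xt, symmetric] Xt by (simp add: inv)
  finally have "P * (X * B) = X * B"
    unfolding XB .
  with P_XB show ?thesis
    by (simp add: P_def)
qed

lemma pinv_mat_mult_full_row_rank:
  fixes B Gi :: "real mat"
  assumes B: "B \<in> carrier_mat k n" and Gi: "Gi \<in> carrier_mat k k"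
    and inv: "B * transpose_mat B * Gi = 1\<^sub>m k"
  shows "pinv_mat B * B = transpose_mat B * Gi * B"
proof -
  have "B * transpose_mat B \<in> carrier_mat k k"
    using B by simp
  from mat_mult_left_right_inverse[OF this Gi inv]
  show ?thesis
    using penrose_projection_full_row_rank[OF B _ Gi] pinv_mat_penrose_full_row_rank[OF B Gi inv]
    by blast
qed

lemma det_minus_rank1_gram:
  fixes B Gi :: "real mat"
  assumes B: "B \<in> carrier_mat k n" and Gi: "Gi \<in> carrier_mat k k"
    and inv: "B * transpose_mat B * Gi = 1\<^sub>m k" and i: "i < n" and j: "j < n"
  shows "det (B * (1\<^sub>m n - mat_unit n j i) * transpose_mat B)
       = det (B * transpose_mat B) * (1 - (transpose_mat B * Gi * B) $$ (i, j))"
proof -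
  define G where "G = B * transpose_mat B"
  define E :: "real mat" where "E = mat_unit n j i"
  define w where "w = (\<lambda>r. (Gi * B) $$ (r, j))"
  have Bt: "transpose_mat B \<in> carrier_mat n k" and G: "G \<in> carrier_mat k k"
    and E: "E \<in> carrier_mat n n" and GiB: "Gi * B \<in> carrier_mat k n"
    using B Gi by (auto simp: G_def E_def)
  have BE: "B * E \<in> carrier_mat k n" and BEBt: "B * E * transpose_mat B \<in> carrier_mat k k"
    using B E by auto
  have "Gi * B * E * transpose_mat B = Gi * (B * E * transpose_mat B)"
    using assoc_mult_mat[OF Gi B E] assoc_mult_mat[OF Gi BE Bt] by simp
  then have "B * E * transpose_mat B = G * (Gi * B * E * transpose_mat B)"
    using assoc_mult_mat[OF G Gi BEBt] inv left_mult_one_mat[OF BEBt] by (simp add: G_def)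
  also have "Gi * B * E * transpose_mat B = mat k k (\<lambda>(r, t). w r * B $$ (t, i))"
    unfolding w_def E_def by (rule mult_mat_unit_mult_transpose[OF GiB B j i])
  finally have "B * (1\<^sub>m n - E) * transpose_mat B = G * (1\<^sub>m k - mat k k (\<lambda>(r, t). w r * B $$ (t, i)))"
    using mult_one_minus_mat_unit_mult_transpose[OF B j i] mult_mat_unit_mult_transpose[OF B B j i]
      mult_minus_distrib_mat[OF G one_carrier_mat, of "mat k k (\<lambda>(r, t). w r * B $$ (t, i))"]
      right_mult_one_mat[OF G]
    by (simp add: G_def E_def)
  then have "det (B * (1\<^sub>m n - E) * transpose_mat B) = det G * (1 - (\<Sum>r<k. w r * B $$ (r, i)))"
    using det_mult[OF G minus_carrier_mat[OF mat_carrier, of "1\<^sub>m k"]] by (simp add: det_one_minus_rank1)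
  moreover have "(transpose_mat B * Gi * B) $$ (i, j) = (\<Sum>r<k. w r * B $$ (r, i))"
    using assoc_mult_mat[OF Bt Gi B] index_mult_mat_sum[OF Bt GiB i j] B i by (simp add: w_def mult.commute)
  ultimately show ?thesis
    by (simp add: G_def E_def)
qed

lemma det_gram_mult_pinv_entry:
  fixes B :: "real mat"
  assumes B: "B \<in> carrier_mat k n" and i: "i < n" and j: "j < n"
  shows "det (B * transpose_mat B) * (pinv_mat B * B) $$ (i, j)
       = det (B * transpose_mat B) - det (B * (1\<^sub>m n - mat_unit n j i) * transpose_mat B)"
proof (cases "det (B * transpose_mat B) = 0")
  case True
  then show ?thesis
    using det_mult_mult_transpose_eq_0[OF B minus_carrier_mat[OF mat_unit_carrier]] by simp
next
  case False
  moreover have G: "B * transpose_mat B \<in> carrier_mat k k"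
    using B by simp
  ultimately obtain Gi where Gi: "Gi \<in> carrier_mat k k" and inv: "B * transpose_mat B * Gi = 1\<^sub>m k"
    using det_non_zero_imp_unit[OF G] unfolding Units_def ring_mat_def by auto
  show ?thesis
    unfolding det_minus_rank1_gram[OF B Gi inv i j] pinv_mat_mult_full_row_rank[OF B Gi inv]
    by (simp add: algebra_simps)
qed

section \<open>Volume sampling\<close>

lemma pick_atLeastLessThan:
  assumes "c < n"
  shows "pick {0..<n} c = c"
proof -
  have "{a. a < n \<and> a \<in> UNIV} = {0..<n}"
    by auto
  then show ?thesis
    using pick_reduce_set[of c n UNIV] assms by (simp add: pick_UNIV)
qed

lemma row_submat_carrier:
  assumes "A \<in> carrier_mat m n" and "S \<subseteq> {0..<m}"
  shows "row_submat A S \<in> carrier_mat (card S) n"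
proof -
  have "{i. i < dim_row A \<and> i \<in> S} = S" "{j. j < dim_col A \<and> j \<in> {0..<dim_col A}} = {0..<n}"
    using assms by auto
  then show ?thesis
    using assms(1) unfolding row_submat_def carrier_mat_def mem_Collect_eq dim_submatrix by simp
qed

lemma row_submat_index:
  assumes A: "A \<in> carrier_mat m n" and S: "S \<subseteq> {0..<m}" and r: "r < card S" and c: "c < n"
  shows "row_submat A S $$ (r, c) = A $$ (pick S r, c)"
proof -
  have "{i. i < dim_row A \<and> i \<in> S} = S" "{j. j < dim_col A \<and> j \<in> {0..<dim_col A}} = {0..<n}"
    using A S by auto
  then show ?thesis
    unfolding row_submat_def using A r c by (simp add: submatrix_index pick_atLeastLessThan)
qed

lemma row_submat_mult_mult_transpose:
  fixes A N :: "real mat"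
  assumes A: "A \<in> carrier_mat m n" and S: "S \<subseteq> {0..<m}" and N: "N \<in> carrier_mat n n"
  shows "row_submat A S * N * transpose_mat (row_submat A S) = submatrix (A * N * transpose_mat A) S S"
proof -
  define B where "B = row_submat A S"
  have B: "B \<in> carrier_mat (card S) n"
    unfolding B_def by (rule row_submat_carrier[OF A S])
  have rows: "{i. i < m \<and> i \<in> S} = S"
    using S by auto
  have pick: "pick S r < m" if "r < card S" for r
    using pick_in_set_le[OF that] S by auto
  have AN: "A * N \<in> carrier_mat m n" and At: "transpose_mat A \<in> carrier_mat n m"
    using A N by auto
  show ?thesis
    unfolding B_def[symmetric]
  proof (rule eq_matI)
    fix r t assume "r < dim_row (submatrix (A * N * transpose_mat A) S S)"
      and "t < dim_col (submatrix (A * N * transpose_mat A) S S)"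
    then have r: "r < card S" and t: "t < card S"
      using A N by (auto simp: dim_submatrix rows)
    have BN: "(B * N) $$ (r, b) = (A * N) $$ (pick S r, b)" if "b < n" for b
      using index_mult_mat_sum[OF B N r that] index_mult_mat_sum[OF A N pick[OF r] that] r
      by (simp add: B_def row_submat_index[OF A S])
    have "(B * N * transpose_mat B) $$ (r, t) = (\<Sum>b<n. (B * N) $$ (r, b) * B $$ (t, b))"
      using index_mult_mat_sum[OF mult_carrier_mat[OF B N] _ r t, of "transpose_mat B"] B t
      by simp
    also have "\<dots> = (\<Sum>b<n. (A * N) $$ (pick S r, b) * A $$ (pick S t, b))"
      using t by (intro sum.cong refl) (simp add: BN B_def[symmetric] row_submat_index[OF A S, folded B_def])
    also have "\<dots> = (A * N * transpose_mat A) $$ (pick S r, pick S t)"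
      using index_mult_mat_sum[OF AN At pick[OF r] pick[OF t]] A pick[OF t] by simp
    also have "\<dots> = submatrix (A * N * transpose_mat A) S S $$ (r, t)"
      using A N r t by (simp add: submatrix_index rows)
    finally show "(B * N * transpose_mat B) $$ (r, t) = submatrix (A * N * transpose_mat A) S S $$ (r, t)" .
  qed (use A B N in \<open>auto simp: dim_submatrix rows\<close>)
qed

lemma sum_det_row_submat_eq_principal_minor_sum:
  fixes A N :: "real mat"
  assumes A: "A \<in> carrier_mat m n" and N: "N \<in> carrier_mat n n"
  shows "(\<Sum>S | S \<subseteq> {0..<m} \<and> card S = s. det (row_submat A S * N * transpose_mat (row_submat A S)))
       = principal_minor_sum s (A * N * transpose_mat A)"
  unfolding principal_minor_sum_def
proof (rule sum.cong)
  fix S assume "S \<in> {S. S \<subseteq> {0..<dim_row (A * N * transpose_mat A)} \<and> card S = s}"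
  then have S: "S \<subseteq> {0..<m}"
    using A by simp
  have "A * N * transpose_mat A \<in> carrier_mat m m"
    using A N by simp
  then show "det (row_submat A S * N * transpose_mat (row_submat A S)) = det_on (\<lambda>i j. (A * N * transpose_mat A) $$ (i, j)) S"
    unfolding row_submat_mult_mult_transpose[OF A S N] by (rule det_submatrix_eq_det_on[OF _ S])
qed (use A in simp)

lemma vol_expect_pinv_mult_index:
  fixes A :: "real mat"
  assumes A: "A \<in> carrier_mat m n" and i: "i < n" and j: "j < n"
  shows "vol_expect A s (\<lambda>S. pinv_mat (row_submat A S) * row_submat A S) n n $$ (i, j)
       = (principal_minor_sum s (A * transpose_mat A)
          - principal_minor_sum s (A * (1\<^sub>m n - mat_unit n j i) * transpose_mat A))
         / principal_minor_sum s (A * transpose_mat A)"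
proof -
  let ?B = "\<lambda>S. row_submat A S"
  let ?gram = "\<lambda>S. det (?B S * transpose_mat (?B S))"
  let ?Z = "principal_minor_sum s (A * transpose_mat A)"
  let ?N = "1\<^sub>m n - mat_unit n j i :: real mat"
  have N: "?N \<in> carrier_mat n n"
    by (rule minus_carrier_mat[OF mat_unit_carrier])
  have gram: "?gram S = det (?B S * 1\<^sub>m n * transpose_mat (?B S))" if "S \<subseteq> {0..<m}" for S
    using row_submat_carrier[OF A that] by simp
  have Z: "(\<Sum>S | S \<subseteq> {0..<dim_row A} \<and> card S = s. ?gram S) = ?Z"
    using sum_det_row_submat_eq_principal_minor_sum[OF A one_carrier_mat, of s] A
    by (simp add: gram)
  have "vol_expect A s (\<lambda>S. pinv_mat (?B S) * ?B S) n n $$ (i, j)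
      = (\<Sum>S | S \<subseteq> {0..<m} \<and> card S = s. vol_prob A s S * (pinv_mat (?B S) * ?B S) $$ (i, j))"
    using A i j by (simp add: vol_expect_def)
  also have "\<dots> = (\<Sum>S | S \<subseteq> {0..<m} \<and> card S = s. (?gram S - det (?B S * ?N * transpose_mat (?B S))) / ?Z)"
  proof (rule sum.cong[OF refl])
    fix S assume "S \<in> {S. S \<subseteq> {0..<m} \<and> card S = s}"
    then have S: "S \<subseteq> {0..<m}" by simp
    show "vol_prob A s S * (pinv_mat (?B S) * ?B S) $$ (i, j) = (?gram S - det (?B S * ?N * transpose_mat (?B S))) / ?Z"
      unfolding vol_prob_def Z det_gram_mult_pinv_entry[OF row_submat_carrier[OF A S] i j, symmetric]
      by simp
  qed
  also have "\<dots> = (principal_minor_sum s (A * transpose_mat A) - principal_minor_sum s (A * ?N * transpose_mat A)) / ?Z"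
    unfolding sum_divide_distrib[symmetric] sum_subtractf
    using sum_det_row_submat_eq_principal_minor_sum[OF A one_carrier_mat, of s]
      sum_det_row_submat_eq_principal_minor_sum[OF A N, of s] A
    by (simp add: gram)
  finally show ?thesis .
qed

lemma vol_expect_pinv_mult_index_orthogonal:
  fixes U P :: "real mat"
  assumes U: "U \<in> carrier_mat m m" and UU: "transpose_mat U * U = 1\<^sub>m m"
    and P: "P \<in> carrier_mat m n" and PPt: "P * transpose_mat P = mat_diag m lam"
    and s: "1 \<le> s" and i: "i < n" and j: "j < n"
  shows "vol_expect (U * P) s (\<lambda>S. pinv_mat (row_submat (U * P) S) * row_submat (U * P) S) n n $$ (i, j)
       = (\<Sum>k<m. P $$ (k, i) * esym (s - 1) ({0..<m} - {k}) lam * P $$ (k, j)) / esym s {0..<m} lam"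
proof -
  have UP: "U * P \<in> carrier_mat m n"
    using U P by simp
  have "principal_minor_sum s (U * P * transpose_mat (U * P)) = esym s {0..<m} lam"
    using principal_minor_sum_orthogonal_left_factor[OF U UU P one_carrier_mat, of s] UP P
    by (simp add: PPt principal_minor_sum_mat_diag[OF s])
  moreover have "principal_minor_sum s (U * P * (1\<^sub>m n - mat_unit n j i) * transpose_mat (U * P))
      = esym s {0..<m} lam - (\<Sum>k\<in>{0..<m}. P $$ (k, j) * P $$ (k, i) * esym (s - 1) ({0..<m} - {k}) lam)"
    unfolding principal_minor_sum_orthogonal_left_factor[OF U UU P minus_carrier_mat[OF mat_unit_carrier]]
  proof (rule principal_minor_sum_diag_minus_rank1[OF _ _ s])
    show "P * (1\<^sub>m n - mat_unit n j i) * transpose_mat P \<in> carrier_mat m m"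
      using mult_carrier_mat[OF mult_carrier_mat[OF P minus_carrier_mat[OF mat_unit_carrier]], of "transpose_mat P" m] P
      by simp
    fix r t assume "r < m" "t < m"
    then show "(P * (1\<^sub>m n - mat_unit n j i) * transpose_mat P) $$ (r, t)
        = (if r = t then lam r else 0) - P $$ (r, j) * P $$ (t, i)"
      by (simp add: mult_one_minus_mat_unit_mult_transpose[OF P j i] PPt mat_diag_def)
  qed
  ultimately show ?thesis
    by (simp add: vol_expect_pinv_mult_index[OF UP i j] atLeast0LessThan mult_ac)
qed

theorem vol_expect_pinv_mult_eigendecomposition:
  fixes A U :: "real mat" and lam :: "nat \<Rightarrow> real"
  assumes A: "A \<in> carrier_mat m n" and U: "U \<in> carrier_mat m m" and UU: "transpose_mat U * U = 1\<^sub>m m"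
    and eig: "A * transpose_mat A = U * mat_diag m lam * transpose_mat U" and s: "1 \<le> s"
  shows "vol_expect A s (\<lambda>S. pinv_mat (row_submat A S) * row_submat A S) n n
       = transpose_mat A * ((1 / esym s {0..<m} lam) \<cdot>\<^sub>m
           (U * mat_diag m (\<lambda>i. esym (s - 1) ({0..<m} - {i}) lam) * transpose_mat U)) * A"
proof -
  define P where "P = transpose_mat U * A"
  define D where "D = mat_diag m (\<lambda>i. esym (s - 1) ({0..<m} - {i}) lam)"
  let ?Z = "esym s {0..<m} lam"
  have P: "P \<in> carrier_mat m n" and Ut: "transpose_mat U \<in> carrier_mat m m"
    and At: "transpose_mat A \<in> carrier_mat n m" and D: "D \<in> carrier_mat m m"
    using U A by (auto simp: P_def D_def)
  have A_eq: "A = U * P"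
    using assoc_mult_mat[OF U Ut A] mat_mult_left_right_inverse[OF Ut U UU] A by (simp add: P_def)
  have "P * transpose_mat P = transpose_mat U * (A * transpose_mat A) * U"
    unfolding P_def transpose_mult[OF Ut A] transpose_transpose
    using assoc_mult_mat[OF Ut A mult_carrier_mat[OF At U]] assoc_mult_mat[OF A At U]
      assoc_mult_mat[OF Ut mult_carrier_mat[OF A At] U] by simp
  then have PPt: "P * transpose_mat P = mat_diag m lam"
    unfolding eig transpose_orthogonal_conj_cancel[OF U UU mat_diag_dim] .
  define M where "M = U * D * transpose_mat U"
  have M: "M \<in> carrier_mat m m"
    using U D by (simp add: M_def)
  have "transpose_mat A * M * A = transpose_mat P * (transpose_mat U * M * U) * P"
    unfolding A_eq transpose_mult[OF U P] using P U M
    by (simp add: assoc_mult_mat[of _ n m _ m _ m] assoc_mult_mat[of _ n m _ m _ n]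
        assoc_mult_mat[of _ m m _ m _ n] assoc_mult_mat[of _ m m _ m _ m])
  then have "transpose_mat A * M * A = transpose_mat P * D * P"
    unfolding M_def transpose_orthogonal_conj_cancel[OF U UU D] .
  then have rhs: "transpose_mat A * ((1 / ?Z) \<cdot>\<^sub>m (U * D * transpose_mat U)) * A
      = (1 / ?Z) \<cdot>\<^sub>m (transpose_mat P * D * P)"
    using A M by (simp add: M_def[symmetric] mult_smult_distrib[of _ n m] mult_smult_assoc_mat[of _ n m])
  show ?thesis
    unfolding D_def[symmetric] rhs
  proof (rule eq_matI)
    fix i j assume "i < dim_row ((1 / ?Z) \<cdot>\<^sub>m (transpose_mat P * D * P))"
      and "j < dim_col ((1 / ?Z) \<cdot>\<^sub>m (transpose_mat P * D * P))"
    then have i: "i < n" and j: "j < n"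
      using P by (auto simp: D_def)
    then show "vol_expect A s (\<lambda>S. pinv_mat (row_submat A S) * row_submat A S) n n $$ (i, j)
        = ((1 / ?Z) \<cdot>\<^sub>m (transpose_mat P * D * P)) $$ (i, j)"
      unfolding A_eq vol_expect_pinv_mult_index_orthogonal[OF U UU P PPt s i j]
      using P by (simp add: index_transpose_mult_diag_mult[OF P i j] D_def)
  qed (use P in \<open>auto simp: vol_expect_def D_def\<close>)
qed

theorem lemma2p1:
  fixes A U Sigma V :: "real mat" and m n s :: nat
  assumes "A \<in> carrier_mat m n"
    and "U \<in> carrier_mat m m" and "transpose_mat U * U = 1\<^sub>m m"
    and "V \<in> carrier_mat n n" and "transpose_mat V * V = 1\<^sub>m n"
    and "Sigma \<in> carrier_mat m n"
    and "\<forall>i<m. \<forall>j<n. i \<noteq> j \<longrightarrow> Sigma $$ (i,j) = 0"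
    and "\<forall>i<min m n. Sigma $$ (i,i) \<ge> 0"
    and "\<forall>i j. i \<le> j \<and> j < min m n \<longrightarrow> Sigma $$ (j,j) \<le> Sigma $$ (i,i)"
    and "A = U * Sigma * transpose_mat V"
    and "1 \<le> s" and "s \<le> vec_space.rank m A"
  shows "let lam = (\<lambda>i. if i < min m n then (Sigma $$ (i,i))\<^sup>2 else 0);
             H = (1 / esym s {0..<m} lam) \<cdot>\<^sub>m
                 (U * mat m m (\<lambda>(i,j). if i = j then esym (s - 1) ({0..<m} - {i}) lam else 0)
                    * transpose_mat U)
         in vol_expect A s (\<lambda>S. pinv_mat (row_submat A S) * row_submat A S) n n
            = transpose_mat A * H * A"
proof -
  note A = assms(1) and U = assms(2,3) and V = assms(4,5) and Sigma = assms(6,7)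
    and svd = assms(10) and s = assms(11)
  define lam where "lam = (\<lambda>i. if i < min m n then (Sigma $$ (i, i))\<^sup>2 else 0)"
  have "A * transpose_mat A = U * Sigma * 1\<^sub>m n * transpose_mat (U * Sigma)"
    unfolding svd using mult_transpose_mult_transpose_orthogonal[OF _ V, of "U * Sigma" m] U(1) Sigma(1)
    by simp
  also have "\<dots> = U * mat_diag m lam * transpose_mat U"
    unfolding mult_mult_transpose_left_factor[OF U(1) Sigma(1) one_carrier_mat] lam_def
    using mult_transpose_rectangular_diag[OF Sigma] Sigma(1) by simp
  finally have "A * transpose_mat A = U * mat_diag m lam * transpose_mat U" .
  moreover have "mat m m (\<lambda>(i, j). if i = j then d i else 0) = mat_diag m d" for d :: "nat \<Rightarrow> real"
    by (rule eq_matI) (auto simp: mat_diag_def)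
  ultimately show ?thesis
    unfolding Let_def lam_def[symmetric] by (simp add: vol_expect_pinv_mult_eigendecomposition[OF A U _ s])
qed

end
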